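(* Let $q$ and $\lambda\in(0,\infty)$ be as in the context and let $U_1=(P_1,Q_1,R_1)^T$ be the unique solution of the Appell system with $\lim_{x\to\infty}U_1(x,\lambda)=(\sqrt\lambda,0,1/\sqrt\lambda)^T$. Fix $c>0$ and let $\gamma(x)=\int_c^x\frac{dt}{R_1(t,\lambda)}$. Define \[U_2=\begin{pmatrix}P_1\cos2\gamma+(Q_1/R_1)\sin2\gamma-(2/R_1)\cos2\gamma\\ Q_1\cos2\gamma+2\sin2\gamma\\ R_1\cos2\gamma\end{pmatrix},\quad U_3=\begin{pmatrix}P_1\sin2\gamma-(Q_1/R_1)\cos2\gamma-(2/R_1)\sin2\gamma\\ Q_1\sin2\gamma-2\cos2\gamma\\ R_1\sin2\gamma\end{pmatrix}.\] Then every solution $U$ of the Appell system can be written as $U=\beta_1U_1+\beta_2U_2+\beta_3U_3$ for constants $\beta_1,\beta_2,\beta_3$ (in particular $U_2,U_3$ are solutions).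
   Context: $q(x)=\frac{q_0}{x^2}+\frac{q_1}{x}+\sum_{n\ge0}q_{n+2}x^n$ with real coefficients, the series convergent on $(0,\infty)$, $q_0\ge-\tfrac14$, $q_0,q_1$ not both zero; for some $x_0>0$ either $q\in L_1(x_0,\infty)$, or $q'\in L_1(x_0,\infty)$, $q\in AC_{loc}[x_0,\infty)$ and $q\to0$ at $\infty$. Appell system: $(P,Q,R)'=M(P,Q,R)^T$ with $M=\begin{pmatrix}0&\lambda-q&0\\-2&0&2(\lambda-q)\\0&-1&0\end{pmatrix}$; under these hypotheses $U_1$ exists and is unique, and $R_1(x,\lambda)>0$ for all $x>0$, so $\gamma$ is well defined. *)

theory Defs
  imports "HOL-Analysis.Analysis"
begin

definition abs_cont_on_interval :: "real \<Rightarrow> real \<Rightarrow> (real \<Rightarrow> real) \<Rightarrow> bool" where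
  "abs_cont_on_interval lo hi f \<longleftrightarrow>
     (\<forall>e>0. \<exists>d>0. \<forall>(n::nat) (a::nat \<Rightarrow> real) (b::nat \<Rightarrow> real).
        (\<forall>i<n. lo \<le> a i \<and> a i \<le> b i \<and> b i \<le> hi) \<and>
        (\<forall>i<n. \<forall>j<n. i \<noteq> j \<longrightarrow> b i \<le> a j \<or> b j \<le> a i) \<and>
        (\<Sum>i<n. b i - a i) < d
        \<longrightarrow> (\<Sum>i<n. \<bar>f (b i) - f (a i)\<bar>) < e)"

definition AC_loc_from :: "real \<Rightarrow> (real \<Rightarrow> real) \<Rightarrow> bool" where
  "AC_loc_from x0 f \<longleftrightarrow> (\<forall>hi\<ge>x0. abs_cont_on_interval x0 hi f)"

definition appell_sol :: "(real \<Rightarrow> real) \<Rightarrow> real \<Rightarrow> (real \<Rightarrow> real) \<Rightarrow> (real \<Rightarrow> real) \<Rightarrow> (real \<Rightarrow> real) \<Rightarrow> bool" where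
  "appell_sol q lam P Q R \<longleftrightarrow>
     (\<forall>x>0. (P has_real_derivative ((lam - q x) * Q x)) (at x) \<and>
            (Q has_real_derivative (- 2 * P x + 2 * (lam - q x) * R x)) (at x) \<and>
            (R has_real_derivative (- Q x)) (at x))"

end

theory Submission
  imports Defs
begin

text \<open>The form \<open>B(U,U') = 2(PR' + RP') - QQ'\<close> is constant along any two solutions of the Appell system.
  For \<open>U\<^sub>1\<close> its value is 4 by the limits at infinity, which forces \<open>R\<^sub>1 \<noteq> 0\<close> and makes
  \<open>\<gamma>' = 1/R\<^sub>1\<close> meaningful; rotating \<open>U\<^sub>1\<close> by the angle \<open>2\<gamma>\<close> then gives solutions, checked
  by direct differentiation. With respect to the form, \<open>U\<^sub>1, U\<^sub>2, U\<^sub>3\<close> are orthogonal with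
  values \<open>4, -4, -4\<close> at every point, so every solution expands in them with the constant
  coefficients \<open>B(U,U\<^sub>1)/4, -B(U,U\<^sub>2)/4, -B(U,U\<^sub>3)/4\<close>.
  The hypotheses on \<open>q\<close> only serve, in the paper, to produce \<open>U\<^sub>1\<close>.\<close>

definition appell_form :: "real \<Rightarrow> real \<Rightarrow> real \<Rightarrow> real \<Rightarrow> real \<Rightarrow> real \<Rightarrow> real" where
  "appell_form p q r p' q' r' = 2 * (p * r' + r * p') - q * q'"

definition rotated_P :: "(real \<Rightarrow> real) \<Rightarrow> (real \<Rightarrow> real) \<Rightarrow> (real \<Rightarrow> real) \<Rightarrow> (real \<Rightarrow> real) \<Rightarrow> real \<Rightarrow> real" where
  "rotated_P P Q R g x = P x * cos (g x) + (Q x / R x) * sin (g x) - (2 / R x) * cos (g x)"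

definition rotated_Q :: "(real \<Rightarrow> real) \<Rightarrow> (real \<Rightarrow> real) \<Rightarrow> real \<Rightarrow> real" where
  "rotated_Q Q g x = Q x * cos (g x) + 2 * sin (g x)"

definition rotated_R :: "(real \<Rightarrow> real) \<Rightarrow> (real \<Rightarrow> real) \<Rightarrow> real \<Rightarrow> real" where
  "rotated_R R g x = R x * cos (g x)"

lemma appell_form_nonzero:
  "appell_form p q r p q r > 0 \<Longrightarrow> r \<noteq> 0"
  by (auto simp: appell_form_def)

lemma appell_form_has_derivative_zero:
  assumes U: "appell_sol q lam P Q R" and V: "appell_sol q lam P' Q' R'" and x: "x > 0"
  shows "((\<lambda>x. appell_form (P x) (Q x) (R x) (P' x) (Q' x) (R' x)) has_real_derivative 0) (at x)"
proof -
  from U x have dP: "(P has_real_derivative (lam - q x) * Q x) (at x)"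
    and dQ: "(Q has_real_derivative - 2 * P x + 2 * (lam - q x) * R x) (at x)"
    and dR: "(R has_real_derivative - Q x) (at x)" by (auto simp: appell_sol_def)
  from V x have dP': "(P' has_real_derivative (lam - q x) * Q' x) (at x)"
    and dQ': "(Q' has_real_derivative - 2 * P' x + 2 * (lam - q x) * R' x) (at x)"
    and dR': "(R' has_real_derivative - Q' x) (at x)" by (auto simp: appell_sol_def)
  show ?thesis
    unfolding appell_form_def
    apply (rule derivative_eq_intros dP dQ dR dP' dQ' dR' | simp)+
    apply (simp add: algebra_simps)
    done
qed

lemma appell_form_constant:
  assumes U: "appell_sol q lam P Q R" and V: "appell_sol q lam P' Q' R'"
    and "x > 0" "y > 0"
  shows "appell_form (P x) (Q x) (R x) (P' x) (Q' x) (R' x) =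
         appell_form (P y) (Q y) (R y) (P' y) (Q' y) (R' y)"
proof -
  have "\<exists>k. \<forall>x\<in>{0<..}. appell_form (P x) (Q x) (R x) (P' x) (Q' x) (R' x) = k"
    by (rule has_field_derivative_zero_constant)
      (auto intro: has_field_derivative_at_within appell_form_has_derivative_zero[OF U V])
  with assms(3,4) show ?thesis by auto
qed

lemma appell_form_self_eq_limit:
  assumes U: "appell_sol q lam P Q R"
    and "(P \<longlongrightarrow> p) at_top" "(Q \<longlongrightarrow> q') at_top" "(R \<longlongrightarrow> r) at_top"
    and x: "x > 0"
  shows "appell_form (P x) (Q x) (R x) (P x) (Q x) (R x) = appell_form p q' r p q' r"
proof -
  define B where "B y = appell_form (P y) (Q y) (R y) (P y) (Q y) (R y)" for y
  have lim: "(B \<longlongrightarrow> appell_form p q' r p q' r) at_top"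
    unfolding B_def[abs_def] appell_form_def by (intro tendsto_intros assms(2-4))
  have "\<forall>\<^sub>F y in at_top. B y = B x"
    using eventually_gt_at_top[of 0]
    by eventually_elim (simp add: B_def appell_form_constant[OF U U _ x])
  then have "\<forall>\<^sub>F y in at_top. B y = (\<lambda>_. B x) y" by simp
  from Lim_transform_eventually[OF lim this] show ?thesis
    by (simp add: B_def tendsto_const_iff)
qed

lemma interval_integral_has_real_derivative:
  fixes f :: "real \<Rightarrow> real"
  assumes "c > 0" "x > 0" "\<And>t. t > 0 \<Longrightarrow> isCont f t"
  shows "((\<lambda>u. LBINT t=ereal c..ereal u. f t) has_real_derivative f x) (at x)"
proof -
  define d where "d = min x c / 2"
  define e where "e = max x c + 1"
  have de: "d > 0" "d < c" "d < x" "c < e" "x < e" using assms by (auto simp: d_def e_def)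
  have "continuous_on {d..e} f"
    by (intro continuous_at_imp_continuous_on ballI assms(3)) (use de in auto)
  then have "((\<lambda>u. LBINT t=ereal c..ereal u. f t) has_vector_derivative f x) (at x within {d..e})"
    by (intro interval_integral_FTC2) (use de in linarith)+
  then show ?thesis
    using at_within_Icc_at[of d x e] de by (simp add: has_real_derivative_iff_has_vector_derivative)
qed

lemma rotation_has_real_derivatives:
  fixes P Q R g :: "real \<Rightarrow> real"
  assumes dP: "(P has_real_derivative m * Q x) (at x)"
    and dQ: "(Q has_real_derivative - 2 * P x + 2 * m * R x) (at x)"
    and dR: "(R has_real_derivative - Q x) (at x)"
    and dg: "(g has_real_derivative 2 / R x) (at x)"
    and inv: "appell_form (P x) (Q x) (R x) (P x) (Q x) (R x) = 4"
  shows "(rotated_P P Q R g has_real_derivative m * rotated_Q Q g x) (at x)"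
    and "(rotated_Q Q g has_real_derivative - 2 * rotated_P P Q R g x + 2 * m * rotated_R R g x) (at x)"
    and "(rotated_R R g has_real_derivative - rotated_Q Q g x) (at x)"
proof -
  have R0: "R x \<noteq> 0"
    using appell_form_nonzero[of "P x" "Q x" "R x"] inv by simp
  have Q_sq: "(Q x)\<^sup>2 = 4 * P x * R x - 4"
    using inv by (simp add: appell_form_def power2_eq_square algebra_simps)
  have Q_Q_mult: "\<And>z. Q x * (Q x * z) = (4 * P x * R x - 4) * z"
    using Q_sq by (metis mult.assoc power2_eq_square)
  show "(rotated_P P Q R g has_real_derivative m * rotated_Q Q g x) (at x)"
    unfolding rotated_P_def[abs_def] rotated_Q_def
    apply (rule derivative_eq_intros dP dQ dR dg | simp add: R0)+
    using R0 apply (simp add: field_simps)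
    apply (simp add: Q_Q_mult algebra_simps)
    done
  show "(rotated_Q Q g has_real_derivative - 2 * rotated_P P Q R g x + 2 * m * rotated_R R g x) (at x)"
    unfolding rotated_Q_def[abs_def] rotated_P_def rotated_R_def
    apply (rule derivative_eq_intros dP dQ dR dg | simp add: R0)+
    using R0 apply (simp add: field_simps)
    done
  show "(rotated_R R g has_real_derivative - rotated_Q Q g x) (at x)"
    unfolding rotated_R_def[abs_def] rotated_Q_def
    by (rule derivative_eq_intros dP dQ dR dg | simp add: R0)+
qed

lemma appell_sol_rotate:
  assumes U: "appell_sol q lam P Q R"
    and inv: "\<And>x. x > 0 \<Longrightarrow> appell_form (P x) (Q x) (R x) (P x) (Q x) (R x) = 4"
    and dg: "\<And>x. x > 0 \<Longrightarrow> (g has_real_derivative 2 / R x) (at x)"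
  shows "appell_sol q lam (rotated_P P Q R g) (rotated_Q Q g) (rotated_R R g)"
proof -
  have dP: "(P has_real_derivative (lam - q x) * Q x) (at x)"
    and dQ: "(Q has_real_derivative - 2 * P x + 2 * (lam - q x) * R x) (at x)"
    and dR: "(R has_real_derivative - Q x) (at x)" if "x > 0" for x
    using U that by (auto simp: appell_sol_def)
  show ?thesis
    unfolding appell_sol_def by (meson rotation_has_real_derivatives dP dQ dR dg inv)
qed

lemma appell_rotation_frame_decomposition:
  fixes p q r p1 q1 r1 C S :: real
  assumes inv: "appell_form p1 q1 r1 p1 q1 r1 = 4" and cs: "C\<^sup>2 + S\<^sup>2 = 1"
  defines "p2 \<equiv> p1 * C + (q1 / r1) * S - (2 / r1) * C" and "q2 \<equiv> q1 * C + 2 * S"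
    and "r2 \<equiv> r1 * C"
    and "p3 \<equiv> p1 * S - (q1 / r1) * C - (2 / r1) * S" and "q3 \<equiv> q1 * S - 2 * C"
    and "r3 \<equiv> r1 * S"
  defines "b1 \<equiv> appell_form p q r p1 q1 r1 / 4"
    and "b2 \<equiv> - (appell_form p q r p2 q2 r2 / 4)"
    and "b3 \<equiv> - (appell_form p q r p3 q3 r3 / 4)"
  shows "p = b1 * p1 + b2 * p2 + b3 * p3 \<and> q = b1 * q1 + b2 * q2 + b3 * q3 \<and>
         r = b1 * r1 + b2 * r2 + b3 * r3"
proof -
  have r1: "r1 \<noteq> 0"
    using appell_form_nonzero[of p1 q1 r1] inv by simp
  have inv_sq: "4 * p1 * r1 - q1\<^sup>2 = 4"
    using inv by (simp add: appell_form_def power2_eq_square algebra_simps)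
  show ?thesis
    unfolding b1_def b2_def b3_def appell_form_def p2_def q2_def r2_def p3_def q3_def r3_def
    using r1 apply (simp add: field_simps)
    using inv_sq cs apply algebra
    done
qed

text \<open>Rotating by \<open>g - \<pi>/2\<close> instead of \<open>g\<close> turns the cosine-type frame vector into the
  sine-type one, and \<open>g - \<pi>/2\<close> has the same derivative as \<open>g\<close>.\<close>
lemma appell_sol_expansion:
  assumes U1: "appell_sol q lam P1 Q1 R1"
    and inv: "\<And>x. x > 0 \<Longrightarrow> appell_form (P1 x) (Q1 x) (R1 x) (P1 x) (Q1 x) (R1 x) = 4"
    and dg: "\<And>x. x > 0 \<Longrightarrow> (g has_real_derivative 2 / R1 x) (at x)"
    and U: "appell_sol q lam P Q R"
  defines "h \<equiv> \<lambda>x. g x - pi / 2"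
  shows "\<exists>b1 b2 b3. \<forall>x>0.
           P x = b1 * P1 x + b2 * rotated_P P1 Q1 R1 g x + b3 * rotated_P P1 Q1 R1 h x \<and>
           Q x = b1 * Q1 x + b2 * rotated_Q Q1 g x + b3 * rotated_Q Q1 h x \<and>
           R x = b1 * R1 x + b2 * rotated_R R1 g x + b3 * rotated_R R1 h x"
proof -
  have U2: "appell_sol q lam (rotated_P P1 Q1 R1 g) (rotated_Q Q1 g) (rotated_R R1 g)"
    using appell_sol_rotate[OF U1 inv dg] .
  have "(h has_real_derivative 2 / R1 x) (at x)" if "x > 0" for x
    unfolding h_def using dg[OF that] by (auto intro!: derivative_eq_intros)
  then have U3: "appell_sol q lam (rotated_P P1 Q1 R1 h) (rotated_Q Q1 h) (rotated_R R1 h)"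
    using appell_sol_rotate[OF U1 inv] by blast
  define B where "B P' Q' R' = appell_form (P 1) (Q 1) (R 1) (P' 1) (Q' 1) (R' 1) / 4"
    for P' Q' R' :: "real \<Rightarrow> real"
  have B_eq: "B P' Q' R' = appell_form (P x) (Q x) (R x) (P' x) (Q' x) (R' x) / 4"
    if "appell_sol q lam P' Q' R'" "x > 0" for P' Q' R' x
    unfolding B_def using appell_form_constant[OF U that(1), of 1 x] that(2) by simp
  define b1 b2 b3 where "b1 = B P1 Q1 R1"
    and "b2 = - B (rotated_P P1 Q1 R1 g) (rotated_Q Q1 g) (rotated_R R1 g)"
    and "b3 = - B (rotated_P P1 Q1 R1 h) (rotated_Q Q1 h) (rotated_R R1 h)"
  have "P x = b1 * P1 x + b2 * rotated_P P1 Q1 R1 g x + b3 * rotated_P P1 Q1 R1 h x \<and>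
        Q x = b1 * Q1 x + b2 * rotated_Q Q1 g x + b3 * rotated_Q Q1 h x \<and>
        R x = b1 * R1 x + b2 * rotated_R R1 g x + b3 * rotated_R R1 h x" if x: "x > 0" for x
  proof -
    have "rotated_P P1 Q1 R1 h x = P1 x * sin (g x) - (Q1 x / R1 x) * cos (g x) - (2 / R1 x) * sin (g x)"
      "rotated_Q Q1 h x = Q1 x * sin (g x) - 2 * cos (g x)" "rotated_R R1 h x = R1 x * sin (g x)"
      by (simp_all add: rotated_P_def rotated_Q_def rotated_R_def h_def cos_diff sin_diff)
    then show ?thesis
      unfolding b1_def b2_def b3_def B_eq[OF U1 x] B_eq[OF U2 x] B_eq[OF U3 x]
      using appell_rotation_frame_decomposition[OF inv[OF x] sin_cos_squared_add2[of "g x"],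
          of "P x" "Q x" "R x"]
      by (simp only: rotated_P_def rotated_Q_def rotated_R_def)
  qed
  then show ?thesis by blast
qed

theorem lemma2:
  fixes q :: "real \<Rightarrow> real" and q0 q1 :: real and a :: "nat \<Rightarrow> real"
    and lam c :: real and P1 Q1 R1 \<gamma> :: "real \<Rightarrow> real"
  assumes conv: "\<forall>x>0. summable (\<lambda>n. a n * x ^ n)"
    and q_def: "\<forall>x>0. q x = q0 / x\<^sup>2 + q1 / x + (\<Sum>n. a n * x ^ n)"
    and q0_ge: "q0 \<ge> - 1 / 4"
    and q01: "q0 \<noteq> 0 \<or> q1 \<noteq> 0"
    and decay: "\<exists>x0>0. set_integrable lborel {x0..} q \<or>
                  (set_integrable lborel {x0..} (deriv q) \<and> AC_loc_from x0 q \<and>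
                   (q \<longlongrightarrow> 0) at_top)"
    and lam_pos: "lam > 0"
    and c_pos: "c > 0"
    and U1_sol: "appell_sol q lam P1 Q1 R1"
    and U1_lim: "(P1 \<longlongrightarrow> sqrt lam) at_top" "(Q1 \<longlongrightarrow> 0) at_top"
                "(R1 \<longlongrightarrow> 1 / sqrt lam) at_top"
  defines "\<gamma> \<equiv> \<lambda>x::real. (LBINT t=ereal c..ereal x. 1 / R1 t)"
    and "P2 \<equiv> \<lambda>x. P1 x * cos (2 * \<gamma> x) + (Q1 x / R1 x) * sin (2 * \<gamma> x) - (2 / R1 x) * cos (2 * \<gamma> x)"
    and "Q2 \<equiv> \<lambda>x. Q1 x * cos (2 * \<gamma> x) + 2 * sin (2 * \<gamma> x)"
    and "R2 \<equiv> \<lambda>x. R1 x * cos (2 * \<gamma> x)"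
    and "P3 \<equiv> \<lambda>x. P1 x * sin (2 * \<gamma> x) - (Q1 x / R1 x) * cos (2 * \<gamma> x) - (2 / R1 x) * sin (2 * \<gamma> x)"
    and "Q3 \<equiv> \<lambda>x. Q1 x * sin (2 * \<gamma> x) - 2 * cos (2 * \<gamma> x)"
    and "R3 \<equiv> \<lambda>x. R1 x * sin (2 * \<gamma> x)"
  shows "appell_sol q lam P2 Q2 R2 \<and> appell_sol q lam P3 Q3 R3 \<and>
         (\<forall>P Q R. appell_sol q lam P Q R \<longrightarrow>
            (\<exists>b1 b2 b3. \<forall>x>0.
               P x = b1 * P1 x + b2 * P2 x + b3 * P3 x \<and>
               Q x = b1 * Q1 x + b2 * Q2 x + b3 * Q3 x \<and>
               R x = b1 * R1 x + b2 * R2 x + b3 * R3 x))"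
proof -
  have inv: "appell_form (P1 x) (Q1 x) (R1 x) (P1 x) (Q1 x) (R1 x) = 4" if "x > 0" for x
    using appell_form_self_eq_limit[OF U1_sol U1_lim that] lam_pos by (simp add: appell_form_def)
  have "isCont (\<lambda>t. 1 / R1 t) t" if "t > 0" for t
  proof -
    have "isCont R1 t" using U1_sol that unfolding appell_sol_def by (blast intro: DERIV_isCont)
    then show ?thesis
      using appell_form_nonzero[of "P1 t" "Q1 t" "R1 t"] inv[OF that] by (simp add: continuous_intros)
  qed
  then have d\<gamma>: "((\<lambda>x. 2 * \<gamma> x - k) has_real_derivative 2 / R1 x) (at x)" if "x > 0" for x k
    unfolding \<gamma>_def using interval_integral_has_real_derivative[OF c_pos that]
    by (auto intro!: derivative_eq_intros)
  have d2\<gamma>: "((\<lambda>x. 2 * \<gamma> x) has_real_derivative 2 / R1 x) (at x)" if "x > 0" for x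
    using d\<gamma>[OF that, of 0] by simp
  have U2_eq: "P2 = rotated_P P1 Q1 R1 (\<lambda>x. 2 * \<gamma> x)" "Q2 = rotated_Q Q1 (\<lambda>x. 2 * \<gamma> x)"
    "R2 = rotated_R R1 (\<lambda>x. 2 * \<gamma> x)"
    by (simp_all add: fun_eq_iff P2_def Q2_def R2_def rotated_P_def rotated_Q_def rotated_R_def)
  have U3_eq: "P3 = rotated_P P1 Q1 R1 (\<lambda>x. 2 * \<gamma> x - pi / 2)"
    "Q3 = rotated_Q Q1 (\<lambda>x. 2 * \<gamma> x - pi / 2)" "R3 = rotated_R R1 (\<lambda>x. 2 * \<gamma> x - pi / 2)"
    by (simp_all add: fun_eq_iff P3_def Q3_def R3_def rotated_P_def rotated_Q_def rotated_R_def
        cos_diff sin_diff)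
  show ?thesis
    unfolding U2_eq U3_eq
    using appell_sol_rotate[OF U1_sol inv d2\<gamma>] appell_sol_rotate[OF U1_sol inv d\<gamma>]
      appell_sol_expansion[OF U1_sol inv d2\<gamma>]
    by blast
qed

end
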